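(* Let $n\ge2$. Then \begin{align*} \zeta_{O_{2n}}(u)^{-1}=&(1-u^2)^{2n^2-4n}\bigl((2n-3)^2u^4+(4n-6)u^3+(4n-6)u^2+2u+1\bigr)^{n-1}\\ &\cdot\bigl((2n-3)u^2+1\bigr)\bigl((2n-3)u^2+(2-2n)u+1\bigr). \end{align*}
   Context: For $n\ge2$, the cocktail party graph $O_{2n}$ is the simple graph on $2n$ vertices that is the complement of a perfect matching (equivalently the complete multipartite graph $K_{2,2,\dots,2}$ with $n$ parts of size $2$). For a finite connected graph $G$ with vertex set $V$, edge set $E$ and no vertex of degree $1$, let $r=|E|-|V|+1$, $\mathcal{A}$ the adjacency matrix, $\mathcal{Q}=D-I$ with $D$ the diagonal degree matrix; the reciprocal Ihara zeta function is $\zeta_G(u)^{-1}=(1-u^2)^{r-1}\det(I-\mathcal{A}u+\mathcal{Q}u^2)$. *)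

theory Defs
  imports "Jordan_Normal_Form.Determinant"
begin

text \<open>A finite simple graph on the vertex set {0..<N}, given by a symmetric irreflexive
  adjacency relation E (only its restriction to {0..<N} matters).\<close>

definition num_edges :: "nat \<Rightarrow> (nat \<Rightarrow> nat \<Rightarrow> bool) \<Rightarrow> nat" where
  "num_edges N E = card {(i, j). i < j \<and> j < N \<and> E i j}"

definition degree :: "nat \<Rightarrow> (nat \<Rightarrow> nat \<Rightarrow> bool) \<Rightarrow> nat \<Rightarrow> nat" where
  "degree N E i = card {j. j < N \<and> E i j}"

definition adj_mat :: "nat \<Rightarrow> (nat \<Rightarrow> nat \<Rightarrow> bool) \<Rightarrow> real mat" where
  "adj_mat N E = mat N N (\<lambda>(i, j). if E i j then 1 else 0)"

definition Q_mat :: "nat \<Rightarrow> (nat \<Rightarrow> nat \<Rightarrow> bool) \<Rightarrow> real mat" where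
  "Q_mat N E = mat N N (\<lambda>(i, j). if i = j then real (degree N E i) - 1 else 0)"

text \<open>Reciprocal Ihara zeta function:
  (1-u^2)^(r-1) det(I - A u + Q u^2), with r = |E| - |V| + 1, so r - 1 = |E| - |V|.\<close>
definition ihara_zeta_inv :: "nat \<Rightarrow> (nat \<Rightarrow> nat \<Rightarrow> bool) \<Rightarrow> real \<Rightarrow> real" where
  "ihara_zeta_inv N E u =
     (1 - u^2) powi (int (num_edges N E) - int N) *
     det (1\<^sub>m N - u \<cdot>\<^sub>m adj_mat N E + (u^2) \<cdot>\<^sub>m Q_mat N E)"

text \<open>Cocktail party graph O_{2n} on vertices {0..<2n}: complement of the perfect matching
  {{2k, 2k+1}}.\<close>
definition cocktail_party :: "nat \<Rightarrow> nat \<Rightarrow> bool" where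
  "cocktail_party i j = (i \<noteq> j \<and> i div 2 \<noteq> j div 2)"

end

theory Submission
  imports Defs
begin

(* O_2n is (2n-2)-regular, so I - A u + Q u^2 = a I - u A with a = 1 + (2n-3) u^2, and its
   determinant is the product of a - u lambda over the spectrum of A. The adjacency matrix
   A = J - I - P (P the perfect matching) has an explicit eigenbasis: the all-ones vector
   (eigenvalue 2n-2), the n vectors e_2p - e_2p+1 that are antisymmetric on a matched pair
   (eigenvalue 0), and n-1 vectors that are constant on matched pairs and sum to zero
   (eigenvalue -2). Finally |E| - |V| = 2n^2 - 4n. *)

lemma det_eq_prod_of_eigenbasis:
  fixes A S :: "'a :: idom mat"
  assumes A: "A \<in> carrier_mat N N" and S: "S \<in> carrier_mat N N" and "det S \<noteq> 0"
    and eigen: "\<And>i j. i < N \<Longrightarrow> j < N \<Longrightarrow> (\<Sum>k<N. A $$ (i, k) * S $$ (k, j)) = S $$ (i, j) * d j"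
  shows "det A = (\<Prod>j<N. d j)"
proof -
  define D where "D = mat N N (\<lambda>(i, j). if i = j then d j else 0)"
  have D: "D \<in> carrier_mat N N" by (simp add: D_def)
  have "A * S = S * D"
  proof (rule eq_matI)
    fix i j assume "i < dim_row (S * D)" and "j < dim_col (S * D)"
    then have ij: "i < N" "j < N" using S D by auto
    have "(S * D) $$ (i, j) = (\<Sum>k<N. S $$ (i, k) * (if k = j then d j else 0))"
      using ij S D by (simp add: scalar_prod_def lessThan_atLeast0 D_def cong: if_cong)
    also have "\<dots> = S $$ (i, j) * d j"
      using ij by (simp add: if_distrib cong: if_cong)
    finally show "(A * S) $$ (i, j) = (S * D) $$ (i, j)"
      using ij A S eigen by (simp add: scalar_prod_def lessThan_atLeast0)
  qed (use A S D in auto)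
  then have "det A * det S = det S * det D"
    using det_mult[OF A S] det_mult[OF S D] by metis
  then have "det A = det D"
    using \<open>det S \<noteq> 0\<close> by (simp add: mult.commute)
  also have "\<dots> = prod_list (diag_mat D)"
    by (rule det_upper_triangular[OF _ D]) (auto simp: upper_triangular_def D_def)
  also have "\<dots> = (\<Prod>j<N. d j)"
    by (simp add: prod_list_diag_prod D_def lessThan_atLeast0)
  finally show ?thesis .
qed

lemma sum_lessThan_double:
  "(\<Sum>k<2 * n. f k) = (\<Sum>p<(n::nat). f (2 * p) + f (2 * p + 1) :: 'a :: comm_monoid_add)"
  by (induction n) (simp_all add: add_ac)

lemma prod_lessThan_double:
  "(\<Prod>k<2 * n. f k) = (\<Prod>p<(n::nat). f (2 * p) * f (2 * p + 1) :: 'a :: comm_monoid_mult)"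
  by (induction n) (simp_all add: mult.assoc)

lemma sum_lessThan_double_pair:
  assumes "p < (n::nat)"
  shows "(\<Sum>k<2 * n. if k div 2 = p then f k else 0) = (f (2 * p) + f (2 * p + 1) :: 'a :: comm_monoid_add)"
proof -
  have "(\<Sum>k<2 * n. if k div 2 = p then f k else 0) =
      (\<Sum>q<n. if q = p then f (2 * q) + f (2 * q + 1) else 0)"
    unfolding sum_lessThan_double by (rule sum.cong) auto
  then show ?thesis using assms by simp
qed

lemma cocktail_party_iff: "cocktail_party i k \<longleftrightarrow> k div 2 \<noteq> i div 2"
  unfolding cocktail_party_def by auto

lemma cocktail_party_degree:
  assumes "i < 2 * n"
  shows "degree (2 * n) cocktail_party i = 2 * n - 2"
proof -
  have "{k. k < 2 * n \<and> cocktail_party i k} = {..<2 * n} - {2 * (i div 2), 2 * (i div 2) + 1}"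
    unfolding cocktail_party_iff by auto
  moreover have "{2 * (i div 2), 2 * (i div 2) + 1} \<subseteq> {..<2 * n}"
    using assms by auto presburger+
  ultimately show ?thesis
    unfolding degree_def by (simp add: card_Diff_subset)
qed

lemma cocktail_party_num_edges: "num_edges (2 * n) cocktail_party = 2 * n^2 - 2 * n"
proof -
  have "{(i, k). i < k \<and> k < 2 * n \<and> cocktail_party i k} =
      (\<lambda>(k, i). (i, k)) ` (SIGMA k:{..<2 * n}. {..<2 * (k div 2)})"
    unfolding cocktail_party_iff by (auto simp: image_iff)
  moreover have "inj_on (\<lambda>(k, i). (i, k)) (SIGMA k:{..<2 * n}. {..<2 * (k div (2::nat))})"
    by (auto simp: inj_on_def)
  ultimately have "num_edges (2 * n) cocktail_party = (\<Sum>k<2 * n. 2 * (k div 2))"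
    unfolding num_edges_def by (simp add: card_image)
  also have "\<dots> = (\<Sum>p<n. 4 * p)"
    unfolding sum_lessThan_double by simp
  also have "\<dots> = 2 * n^2 - 2 * n"
    by (induction n) (simp_all add: power2_eq_square algebra_simps)
  finally show ?thesis .
qed

lemma sum_cocktail_party_neighbours:
  assumes "i < 2 * n"
  shows "(\<Sum>k<2 * n. (if cocktail_party i k then 1 else 0) * x k) =
    (\<Sum>k<2 * n. x k) - x (2 * (i div 2)) - (x (2 * (i div 2) + 1) :: real)"
proof -
  have "(\<Sum>k<2 * n. (if cocktail_party i k then 1 else 0) * x k) =
      (\<Sum>k<2 * n. x k - (if k div 2 = i div 2 then x k else 0))"
    unfolding cocktail_party_iff by (rule sum.cong) auto
  also have "\<dots> = (\<Sum>k<2 * n. x k) - (x (2 * (i div 2)) + x (2 * (i div 2) + 1))"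
    using assms by (simp add: sum_subtractf sum_lessThan_double_pair)
  finally show ?thesis by simp
qed

definition cocktail_party_eigvec :: "nat \<Rightarrow> nat \<Rightarrow> real" where
  "cocktail_party_eigvec i j =
    (if j = 0 then 1
     else if odd j then (if i = j - 1 then 1 else if i = j then -1 else 0)
     else (if i div 2 = j div 2 then 1 else 0) - (if i div 2 = 0 then 1 else 0))"

definition cocktail_party_eigval :: "nat \<Rightarrow> nat \<Rightarrow> real" where
  "cocktail_party_eigval n j = (if j = 0 then 2 * real n - 2 else if odd j then 0 else -2)"

lemma sum_cocktail_party_eigvec:
  assumes j: "j < 2 * n"
  shows "(\<Sum>i<2 * n. cocktail_party_eigvec i j * x i) =
    (if j = 0 then (\<Sum>i<2 * n. x i)
     else if odd j then x (j - 1) - x j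
     else x j + x (j + 1) - x 0 - x 1)"
proof -
  consider "j = 0" | "odd j" | "j \<noteq> 0" "even j" by blast
  then show ?thesis
  proof cases
    case 1
    then show ?thesis by (simp add: cocktail_party_eigvec_def)
  next
    case 2
    have "(\<Sum>i<2 * n. cocktail_party_eigvec i j * x i) =
        (\<Sum>i<2 * n. (if i = j - 1 then x i else 0) - (if i = j then x i else 0))"
      using 2 by (intro sum.cong) (auto simp: cocktail_party_eigvec_def)
    also have "\<dots> = x (j - 1) - x j"
      using j by (simp add: sum_subtractf)
    finally show ?thesis using 2 by auto
  next
    case 3
    have "(\<Sum>i<2 * n. cocktail_party_eigvec i j * x i) =
        (\<Sum>i<2 * n. (if i div 2 = j div 2 then x i else 0) - (if i div 2 = 0 then x i else 0))"
      using 3 by (intro sum.cong) (auto simp: cocktail_party_eigvec_def)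
    also have "\<dots> = x j + x (j + 1) - x 0 - x 1"
      using j 3 by (simp add: sum_subtractf sum_lessThan_double_pair)
    finally show ?thesis using 3 by simp
  qed
qed

lemma cocktail_party_eigvec_pair_sum:
  assumes "j \<noteq> 0"
  shows "cocktail_party_eigvec (2 * (i div 2)) j + cocktail_party_eigvec (2 * (i div 2) + 1) j =
    - cocktail_party_eigval n j * cocktail_party_eigvec i j"
  using assms
  by (auto simp: cocktail_party_eigvec_def cocktail_party_eigval_def elim!: oddE) presburger

lemma cocktail_party_adjacency_eigvec:
  assumes i: "i < 2 * n" and j: "j < 2 * n"
  shows "(\<Sum>k<2 * n. (if cocktail_party i k then 1 else 0) * cocktail_party_eigvec k j) =
    cocktail_party_eigval n j * cocktail_party_eigvec i j"
proof (cases "j = 0")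
  case True
  then show ?thesis
    using sum_cocktail_party_neighbours[OF i, of "\<lambda>_. 1"]
    by (simp add: cocktail_party_eigvec_def cocktail_party_eigval_def)
next
  case False
  have "(\<Sum>k<2 * n. cocktail_party_eigvec k j) = 0"
    using sum_cocktail_party_eigvec[OF j, of "\<lambda>_. 1"] False by simp
  then show ?thesis
    using i cocktail_party_eigvec_pair_sum[OF False, of i n] by (simp add: sum_cocktail_party_neighbours)
qed

lemma cocktail_party_eigvec_left_kernel:
  assumes n: "n \<ge> 1" and i: "i < 2 * n"
    and kernel: "\<And>j. j < 2 * n \<Longrightarrow> (\<Sum>i<2 * n. cocktail_party_eigvec i j * x i) = 0"
  shows "x i = 0"
proof -
  have pair: "x (2 * p + 1) = x (2 * p)" if "p < n" for p
    using kernel[of "2 * p + 1"] sum_cocktail_party_eigvec[of "2 * p + 1" n x] that by simp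
  have pair_0: "x (2 * p) = x 0" if "p < n" for p
  proof (cases "p = 0")
    case False
    then show ?thesis
      using kernel[of "2 * p"] sum_cocktail_party_eigvec[of "2 * p" n x] that pair[of p] pair[of 0]
      by simp
  qed simp
  have const: "x k = x 0" if "k < 2 * n" for k
  proof -
    have "k div 2 < n" "k = 2 * (k div 2) \<or> k = 2 * (k div 2) + 1"
      using that by presburger+
    then show ?thesis using pair pair_0 by metis
  qed
  have "(\<Sum>k<2 * n. x k) = 0"
    using kernel[of 0] sum_cocktail_party_eigvec[of 0 n x] n by simp
  moreover have "(\<Sum>k<2 * n. x k) = (\<Sum>k<2 * n. x 0)"
    by (meson const lessThan_iff sum.cong)
  ultimately show ?thesis
    using const[OF i] n by simp
qed

lemma det_cocktail_party_eigvec_nonzero: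
  assumes n: "n \<ge> 1"
  shows "det (mat (2 * n) (2 * n) (\<lambda>(i, j). cocktail_party_eigvec i j)) \<noteq> 0"
    (is "det ?S \<noteq> 0")
proof
  assume "det ?S = 0"
  then have "det (transpose_mat ?S) = 0"
    by (subst det_transpose[of _ "2 * n"]) auto
  then obtain v where v: "v \<in> carrier_vec (2 * n)" "v \<noteq> 0\<^sub>v (2 * n)"
    and Sv: "transpose_mat ?S *\<^sub>v v = 0\<^sub>v (2 * n)"
    using det_0_iff_vec_prod_zero_field[of "transpose_mat ?S" "2 * n"] by auto
  have "(\<Sum>i<2 * n. cocktail_party_eigvec i j * v $ i) = 0" if "j < 2 * n" for j
    using arg_cong[OF Sv, of "\<lambda>w. w $ j"] that v(1)
    by (simp add: scalar_prod_def lessThan_atLeast0)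
  then have "v $ i = 0" if "i < 2 * n" for i
    using cocktail_party_eigvec_left_kernel[OF n that] by blast
  then have "v = 0\<^sub>v (2 * n)"
    using v(1) by (intro eq_vecI) auto
  with v(2) show False by simp
qed

lemma cocktail_party_ihara_mat_eigvec:
  fixes u :: real
  assumes n: "n \<ge> 1" and i: "i < 2 * n" and j: "j < 2 * n"
  defines "M \<equiv> 1\<^sub>m (2 * n) - u \<cdot>\<^sub>m adj_mat (2 * n) cocktail_party + u^2 \<cdot>\<^sub>m Q_mat (2 * n) cocktail_party"
  shows "(\<Sum>k<2 * n. M $$ (i, k) * cocktail_party_eigvec k j) =
    cocktail_party_eigvec i j * (1 + (2 * real n - 3) * u^2 - u * cocktail_party_eigval n j)"
proof -
  have entry: "M $$ (i, k) = (if k = i then 1 + (2 * real n - 3) * u^2 else 0) -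
      u * (if cocktail_party i k then 1 else 0)" if "k < 2 * n" for k
    using i that n cocktail_party_degree[OF i]
    by (simp add: M_def adj_mat_def Q_mat_def of_nat_diff cocktail_party_def algebra_simps)
  then have "(\<Sum>k<2 * n. M $$ (i, k) * cocktail_party_eigvec k j) =
      (\<Sum>k<2 * n. (if k = i then (1 + (2 * real n - 3) * u^2) * cocktail_party_eigvec k j else 0) -
        u * ((if cocktail_party i k then 1 else 0) * cocktail_party_eigvec k j))"
    by (intro sum.cong refl) (simp add: entry left_diff_distrib)
  also have "\<dots> = (1 + (2 * real n - 3) * u^2) * cocktail_party_eigvec i j -
      u * (cocktail_party_eigval n j * cocktail_party_eigvec i j)"
    using i j by (simp add: sum_subtractf flip: sum_distrib_left cocktail_party_adjacency_eigvec)
  finally show ?thesis by (simp add: algebra_simps)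
qed

lemma det_cocktail_party_ihara_mat:
  fixes u :: real
  assumes n: "n \<ge> 1"
  shows "det (1\<^sub>m (2 * n) - u \<cdot>\<^sub>m adj_mat (2 * n) cocktail_party + u^2 \<cdot>\<^sub>m Q_mat (2 * n) cocktail_party) =
    (\<Prod>j<2 * n. 1 + (2 * real n - 3) * u^2 - u * cocktail_party_eigval n j)"
  using det_cocktail_party_eigvec_nonzero[OF n] cocktail_party_ihara_mat_eigvec[OF n]
  by (intro det_eq_prod_of_eigenbasis[where S = "mat (2 * n) (2 * n) (\<lambda>(i, j). cocktail_party_eigvec i j)"])
     (auto simp: adj_mat_def Q_mat_def)

lemma prod_cocktail_party_eigval:
  assumes n: "n \<ge> 1"
  shows "(\<Prod>j<2 * n. a - u * cocktail_party_eigval n j) =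
    (a - (2 * real n - 2) * u) * a * (a * (a + 2 * u))^(n - 1)"
proof -
  obtain m where m: "n = Suc m" using n by (cases n) auto
  have "(\<Prod>j<2 * n. a - u * cocktail_party_eigval n j) =
      (\<Prod>p<n. (a - u * cocktail_party_eigval n (2 * p)) * (a - u * cocktail_party_eigval n (2 * p + 1)))"
    by (rule prod_lessThan_double)
  also have "\<dots> = (a - (2 * real n - 2) * u) * a * (\<Prod>p<m. a * (a + 2 * u))"
    unfolding m prod.lessThan_Suc_shift by (simp add: cocktail_party_eigval_def algebra_simps)
  finally show ?thesis using m by simp
qed

theorem mainTheorem12:
  fixes n :: nat and u :: real
  assumes "n \<ge> 2"
  shows "ihara_zeta_inv (2 * n) cocktail_party u =
    (1 - u^2) ^ (2 * n^2 - 4 * n) *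
    ((2 * real n - 3)^2 * u^4 + (4 * real n - 6) * u^3 + (4 * real n - 6) * u^2 + 2 * u + 1) ^ (n - 1) *
    ((2 * real n - 3) * u^2 + 1) *
    ((2 * real n - 3) * u^2 + (2 - 2 * real n) * u + 1)"
proof -
  have n: "n \<ge> 1" using assms by simp
  define a where "a = 1 + (2 * real n - 3) * u^2"
  have "4 * n \<le> 2 * n^2"
    using assms by (simp add: power2_eq_square)
  then have exponent: "int (num_edges (2 * n) cocktail_party) - int (2 * n) = int (2 * n^2 - 4 * n)"
    by (simp add: cocktail_party_num_edges of_nat_diff)
  have quartic: "(2 * real n - 3)^2 * u^4 + (4 * real n - 6) * u^3 + (4 * real n - 6) * u^2 + 2 * u + 1
      = a * (a + 2 * u)"
    unfolding a_def by (simp add: eval_nat_numeral algebra_simps)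
  have "ihara_zeta_inv (2 * n) cocktail_party u =
      (1 - u^2) ^ (2 * n^2 - 4 * n) * (\<Prod>j<2 * n. a - u * cocktail_party_eigval n j)"
    unfolding ihara_zeta_inv_def exponent det_cocktail_party_ihara_mat[OF n] a_def by simp
  also have "\<dots> = (1 - u^2) ^ (2 * n^2 - 4 * n) * ((a - (2 * real n - 2) * u) * a * (a * (a + 2 * u))^(n - 1))"
    by (simp add: prod_cocktail_party_eigval[OF n])
  finally show ?thesis
    unfolding quartic by (simp add: a_def algebra_simps)
qed

end
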